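(* Let $f\colon (A,I)\to(B,J)$ be an excision datum. Then every ring map from $A$ to a valuation ring of rank $\le 1$ factors through $A\to A/I\times B$ (i.e. factors through $A\to A/I$ or through $f\colon A\to B$). In particular $\mathrm{Spec}(A/I\times B)\to\mathrm{Spec}(A)$ is an $\mathrm{arc}$-cover.
   Context: An excision datum is a ring map $f\colon A\to B$ with ideals $I\subset A$, $J\subset B$ such that $f$ carries $I$ isomorphically onto $J$. A map $Y\to X$ of qcqs schemes is an $\mathrm{arc}$-cover if for every valuation ring $V$ of rank $\le1$ and map $\mathrm{Spec}(V)\to X$ there is a faithfully flat map $V\to W$ to a rank $\le 1$ valuation ring and a map $\mathrm{Spec}(W)\to Y$ such that $\mathrm{Spec}(W)\to Y\to X$ equals $\mathrm{Spec}(W)\to\mathrm{Spec}(V)\to X$. *)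

theory Defs
  imports "HOL-Algebra.Algebra"
begin

definition excision_datum :: "'a ring \<Rightarrow> 'b ring \<Rightarrow> ('a \<Rightarrow> 'b) \<Rightarrow> 'a set \<Rightarrow> 'b set \<Rightarrow> bool" where
  "excision_datum A B f I J \<longleftrightarrow>
     cring A \<and> cring B \<and> f \<in> ring_hom A B \<and> ideal I A \<and> ideal J B \<and> bij_betw f I J"

definition valuation_ring :: "'v ring \<Rightarrow> bool" where
  "valuation_ring V \<longleftrightarrow> domain V \<and>
     (\<forall>x\<in>carrier V. \<forall>y\<in>carrier V.
        (\<exists>c\<in>carrier V. y = x \<otimes>\<^bsub>V\<^esub> c) \<or> (\<exists>c\<in>carrier V. x = y \<otimes>\<^bsub>V\<^esub> c))"

definition rank_le_one :: "'v ring \<Rightarrow> bool" where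
  "rank_le_one V \<longleftrightarrow>
     (\<forall>P. primeideal P V \<and> P \<noteq> {\<zero>\<^bsub>V\<^esub>} \<longrightarrow> maximalideal P V)"

definition valuation_ring_rank_le_one :: "'v ring \<Rightarrow> bool" where
  "valuation_ring_rank_le_one V \<longleftrightarrow> valuation_ring V \<and> rank_le_one V"

text \<open>Flatness of W as a V-module via \<phi> (equational criterion of flatness).\<close>
definition flat_hom :: "'v ring \<Rightarrow> 'w ring \<Rightarrow> ('v \<Rightarrow> 'w) \<Rightarrow> bool" where
  "flat_hom V W \<phi> \<longleftrightarrow>
     (\<forall>n::nat. \<forall>a m.
        (\<forall>i<n. a i \<in> carrier V \<and> m i \<in> carrier W) \<and>
        finsum W (\<lambda>i. \<phi> (a i) \<otimes>\<^bsub>W\<^esub> m i) {..<n} = \<zero>\<^bsub>W\<^esub> \<longrightarrow>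
        (\<exists>k::nat. \<exists>b y.
           (\<forall>i<n. \<forall>j<k. b i j \<in> carrier V) \<and> (\<forall>j<k. y j \<in> carrier W) \<and>
           (\<forall>i<n. m i = finsum W (\<lambda>j. \<phi> (b i j) \<otimes>\<^bsub>W\<^esub> y j) {..<k}) \<and>
           (\<forall>j<k. finsum V (\<lambda>i. a i \<otimes>\<^bsub>V\<^esub> b i j) {..<n} = \<zero>\<^bsub>V\<^esub>)))"

definition faithfully_flat_hom :: "'v ring \<Rightarrow> 'w ring \<Rightarrow> ('v \<Rightarrow> 'w) \<Rightarrow> bool" where
  "faithfully_flat_hom V W \<phi> \<longleftrightarrow>
     \<phi> \<in> ring_hom V W \<and> flat_hom V W \<phi> \<and>
     (\<forall>M. maximalideal M V \<longrightarrow> genideal W (\<phi> ` M) \<noteq> carrier W)"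

end

theory Submission
  imports Defs
begin

text \<open>If \<open>g : A \<rightarrow> V\<close> kills \<open>I\<close> it factors through \<open>A/I\<close>. Otherwise pick \<open>x\<^sub>0 \<in> I\<close> with
  \<open>g x\<^sub>0 \<noteq> 0\<close>. As \<open>f\<close> maps \<open>I\<close> bijectively onto the ideal \<open>J\<close>, each \<open>b \<in> B\<close> has a unique
  \<open>Y b \<in> I\<close> with \<open>f (Y b) = f x\<^sub>0 \<cdot> b\<close>, and \<open>x\<^sub>0 \<cdot> Y (b b') = Y b \<cdot> Y b'\<close>. Hence
  \<open>b \<mapsto> g (Y b) / g x\<^sub>0\<close> is a ring map \<open>B \<rightarrow> Frac V\<close> extending \<open>g\<close>, and it lands in \<open>V\<close>: if
  \<open>g (Y b) / g x\<^sub>0 = 1/c\<close> with \<open>c\<close> a non-unit, then \<open>g x\<^sub>0 = c\<^sup>n g (Y b\<^sup>n)\<close> is divisible by every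
  power of \<open>c\<close>, whereas in a valuation ring of rank \<open>\<le> 1\<close> the elements divisible by all
  \<open>c\<^sup>n\<close> form a prime ideal strictly inside \<open>cV\<close>, hence zero. For the \<open>arc\<close>-cover statement
  one may take \<open>W = V\<close>.\<close>

definition pow_multiples :: "('a, 'm) ring_scheme \<Rightarrow> 'a \<Rightarrow> 'a set" where
  "pow_multiples R c = {v \<in> carrier R. \<forall>n::nat. \<exists>d\<in>carrier R. v = c [^]\<^bsub>R\<^esub> n \<otimes>\<^bsub>R\<^esub> d}"

lemma valuation_ringD:
  fixes V (structure)
  assumes "valuation_ring V"
  shows "domain V"
    and "\<lbrakk>x \<in> carrier V; y \<in> carrier V\<rbrakk> \<Longrightarrow>
           (\<exists>c\<in>carrier V. y = x \<otimes> c) \<or> (\<exists>c\<in>carrier V. x = y \<otimes> c)"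
  using assms unfolding valuation_ring_def by auto

lemma valuation_ring_rank_le_one_domain: "valuation_ring_rank_le_one V \<Longrightarrow> domain V"
  unfolding valuation_ring_rank_le_one_def valuation_ring_def by simp

lemma (in cring) pow_multiples_ideal:
  assumes c: "c \<in> carrier R"
  shows "ideal (pow_multiples R c) R"
proof (rule idealI)
  show "ring R" by (rule ring_axioms)
  have mult_closed: "x \<otimes> a \<in> pow_multiples R c"
    if a: "a \<in> pow_multiples R c" and x: "x \<in> carrier R" for a x
  proof -
    have "\<exists>d\<in>carrier R. x \<otimes> a = c [^] n \<otimes> d" for n :: nat
    proof -
      obtain d where "d \<in> carrier R" "a = c [^] n \<otimes> d"
        using a unfolding pow_multiples_def by blast
      then show ?thesis using x c by (auto intro!: bexI[of _ "x \<otimes> d"] simp: m_lcomm)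
    qed
    then show ?thesis using a x unfolding pow_multiples_def by auto
  qed
  show "subgroup (pow_multiples R c) (add_monoid R)"
  proof (rule subgroup.intro)
    show "pow_multiples R c \<subseteq> carrier (add_monoid R)"
      unfolding pow_multiples_def by auto
    show "\<one>\<^bsub>add_monoid R\<^esub> \<in> pow_multiples R c"
      using c unfolding pow_multiples_def by (auto intro!: bexI[of _ \<zero>])
  next
    fix a b assume a: "a \<in> pow_multiples R c" and b: "b \<in> pow_multiples R c"
    have "\<exists>d\<in>carrier R. a \<oplus> b = c [^] n \<otimes> d" for n :: nat
    proof -
      obtain d where "d \<in> carrier R" "a = c [^] n \<otimes> d"
        using a unfolding pow_multiples_def by blast
      moreover obtain d' where "d' \<in> carrier R" "b = c [^] n \<otimes> d'"
        using b unfolding pow_multiples_def by blast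
      ultimately show ?thesis using c by (auto intro!: bexI[of _ "d \<oplus> d'"] simp: r_distr)
    qed
    then show "a \<otimes>\<^bsub>add_monoid R\<^esub> b \<in> pow_multiples R c"
      using a b unfolding pow_multiples_def by auto
  next
    fix a assume a: "a \<in> pow_multiples R c"
    have "a \<in> carrier R" using a unfolding pow_multiples_def by simp
    then have "\<ominus> a = \<ominus> \<one> \<otimes> a" by (simp add: l_minus)
    moreover have "\<ominus> \<one> \<otimes> a \<in> pow_multiples R c" using a by (intro mult_closed) simp_all
    ultimately show "inv\<^bsub>add_monoid R\<^esub> a \<in> pow_multiples R c"
      by (simp add: a_inv_def)
  qed
  show "x \<otimes> a \<in> pow_multiples R c" "a \<otimes> x \<in> pow_multiples R c"
    if "a \<in> pow_multiples R c" "x \<in> carrier R" for a x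
  proof -
    have "a \<in> carrier R" using that(1) unfolding pow_multiples_def by simp
    then show "x \<otimes> a \<in> pow_multiples R c" "a \<otimes> x \<in> pow_multiples R c"
      using mult_closed[OF that] that(2) by (simp_all add: m_comm)
  qed
qed

lemma (in cring) r_inv_imp_Units:
  assumes "c \<in> carrier R" "d \<in> carrier R" "c \<otimes> d = \<one>"
  shows "c \<in> Units R"
  using unit_factor[of c d] assms by simp

lemma pow_multiples_primeideal:
  fixes V (structure)
  assumes V: "valuation_ring V"
    and c: "c \<in> carrier V" "c \<noteq> \<zero>" "c \<notin> Units V"
  shows "primeideal (pow_multiples V c) V"
proof -
  interpret domain V using V by (rule valuation_ringD)
  have cpow: "c [^] n \<in> carrier V" "c [^] n \<noteq> \<zero>" for n :: nat
    using c by (simp, induct n) (simp_all add: integral_iff)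
  have "\<one> \<notin> pow_multiples V c"
  proof
    assume "\<one> \<in> pow_multiples V c"
    then obtain d where "d \<in> carrier V" "\<one> = c [^] (1::nat) \<otimes> d"
      unfolding pow_multiples_def by blast
    then show False using c r_inv_imp_Units[of c d] by simp
  qed
  then have proper: "carrier V \<noteq> pow_multiples V c" by auto
  show ?thesis
  proof (rule primeidealI[OF pow_multiples_ideal[OF c(1)] is_cring proper])
    fix a b assume a: "a \<in> carrier V" and b: "b \<in> carrier V"
      and ab: "a \<otimes> b \<in> pow_multiples V c"
    show "a \<in> pow_multiples V c \<or> b \<in> pow_multiples V c"
    proof (rule ccontr)
      assume "\<not> ?thesis"
      then obtain m k :: nat where m: "\<forall>d\<in>carrier V. a \<noteq> c [^] m \<otimes> d"
        and k: "\<forall>d\<in>carrier V. b \<noteq> c [^] k \<otimes> d"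
        using a b unfolding pow_multiples_def by blast
      \<comment> \<open>In a valuation ring, failing to be divisible by \<open>c\<^sup>m\<close> means dividing \<open>c\<^sup>m\<close>.\<close>
      obtain e where e: "e \<in> carrier V" "c [^] m = a \<otimes> e"
        using valuation_ringD(2)[OF V cpow(1) a] m by blast
      obtain e' where e': "e' \<in> carrier V" "c [^] k = b \<otimes> e'"
        using valuation_ringD(2)[OF V cpow(1) b] k by blast
      obtain d where d: "d \<in> carrier V" "a \<otimes> b = c [^] Suc (m + k) \<otimes> d"
        using ab unfolding pow_multiples_def by blast
      have "c [^] (m + k) \<otimes> \<one> = (a \<otimes> b) \<otimes> (e \<otimes> e')"
        using a b c e e' by (simp add: nat_pow_mult[symmetric] m_ac)
      also have "\<dots> = c [^] (m + k) \<otimes> (c \<otimes> (d \<otimes> e \<otimes> e'))"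
        using c d e e' by (simp add: m_ac)
      finally have "\<one> = c \<otimes> (d \<otimes> e \<otimes> e')"
        using m_lcancel[OF cpow(2) cpow(1), of \<one> "c \<otimes> (d \<otimes> e \<otimes> e')"] c d e e' by simp
      then show False
        using c d e e' r_inv_imp_Units[of c "d \<otimes> e \<otimes> e'"] by simp
    qed
  qed
qed

lemma rank_le_one_pow_multiples_trivial:
  fixes V (structure)
  assumes V: "valuation_ring_rank_le_one V"
    and c: "c \<in> carrier V" "c \<noteq> \<zero>" "c \<notin> Units V"
  shows "pow_multiples V c = {\<zero>}"
proof (rule ccontr)
  have val: "valuation_ring V" and rk: "rank_le_one V"
    using V unfolding valuation_ring_rank_le_one_def by auto
  interpret domain V using val by (rule valuation_ringD)
  let ?P = "pow_multiples V c"
  assume "?P \<noteq> {\<zero>}"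
  then have max: "maximalideal ?P V"
    using rk pow_multiples_primeideal[OF val c] unfolding rank_le_one_def by blast
  have "?P \<subseteq> PIdl c"
  proof
    fix v assume "v \<in> ?P"
    then obtain d where "d \<in> carrier V" "v = c [^] (1::nat) \<otimes> d"
      unfolding pow_multiples_def by blast
    then show "v \<in> PIdl c" unfolding cgenideal_def using c by (auto intro!: exI[of _ d] simp: m_comm)
  qed
  moreover have "PIdl c \<noteq> carrier V"
  proof
    assume "PIdl c = carrier V"
    then obtain d where "d \<in> carrier V" "\<one> = d \<otimes> c" unfolding cgenideal_def by auto
    then show False using c r_inv_imp_Units[of c d] by (simp add: m_comm)
  qed
  ultimately have "PIdl c = ?P"
    using maximalideal.I_maximal[OF max cgenideal_ideal[OF c(1)]] cgenideal_self[OF c(1)]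
    by (auto dest: ideal.Icarr[OF cgenideal_ideal[OF c(1)]])
  \<comment> \<open>Then \<open>c = c\<^sup>2 d\<close>, and cancelling \<open>c\<close> makes \<open>c\<close> a unit.\<close>
  then obtain d where d: "d \<in> carrier V" "c = c [^] (2::nat) \<otimes> d"
    using cgenideal_self[OF c(1)] unfolding pow_multiples_def by blast
  then have "c \<otimes> \<one> = c \<otimes> (c \<otimes> d)" using c by (simp add: numeral_2_eq_2 m_assoc)
  then have "c \<otimes> d = \<one>" using m_lcancel[of c \<one> "c \<otimes> d"] c d by simp
  then show False using c d r_inv_imp_Units by blast
qed

text \<open>With \<open>h = \<phi> / u\<close> in the fraction field, \<open>u h(b)\<^sup>n = \<phi>(b\<^sup>n) \<in> V\<close> for all \<open>n\<close>; that
  \<open>h(b) \<in> V\<close> follows is complete integral closedness of rank \<open>\<le> 1\<close> valuation rings.\<close>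

lemma rank_le_one_divides_twisted_mult:
  fixes V (structure)
  assumes V: "valuation_ring_rank_le_one V" and B: "monoid B"
    and \<phi>: "\<phi> \<in> carrier B \<rightarrow> carrier V"
    and \<phi>_one: "\<phi> \<one>\<^bsub>B\<^esub> = u" and u: "u \<noteq> \<zero>"
    and \<phi>_mult: "\<And>b b'. b \<in> carrier B \<Longrightarrow> b' \<in> carrier B \<Longrightarrow>
       u \<otimes> \<phi> (b \<otimes>\<^bsub>B\<^esub> b') = \<phi> b \<otimes> \<phi> b'"
    and b: "b \<in> carrier B"
  shows "\<exists>c\<in>carrier V. \<phi> b = u \<otimes> c"
proof -
  have val: "valuation_ring V" using V unfolding valuation_ring_rank_le_one_def by simp
  interpret domain V using val by (rule valuation_ringD)
  interpret B: monoid B by (rule B)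
  have uc: "u \<in> carrier V" using \<phi> \<phi>_one by force
  have \<phi>b: "\<phi> b \<in> carrier V" using \<phi> b by blast
  consider "\<exists>c\<in>carrier V. \<phi> b = u \<otimes> c" | c where "c \<in> carrier V" "u = \<phi> b \<otimes> c"
    using valuation_ringD(2)[OF val uc \<phi>b] by blast
  then show ?thesis
  proof cases
    case (2 c)
    show ?thesis
    proof (cases "c \<in> Units V")
      case True
      then have "\<phi> b = u \<otimes> inv c" using 2 \<phi>b by (simp add: m_assoc)
      then show ?thesis using True by blast
    next
      case False
      have "c \<noteq> \<zero>" using 2 u \<phi>b by auto
      have pow: "u = c [^] n \<otimes> \<phi> (b [^]\<^bsub>B\<^esub> n)" for n :: nat
      proof (induct n)
        case 0
        then show ?case using \<phi>_one uc by simp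
      next
        case (Suc n)
        have bn: "b [^]\<^bsub>B\<^esub> n \<in> carrier B" using b by simp
        have \<phi>bn: "\<phi> (b [^]\<^bsub>B\<^esub> n) \<in> carrier V" "\<phi> (b [^]\<^bsub>B\<^esub> n \<otimes>\<^bsub>B\<^esub> b) \<in> carrier V"
          using \<phi> bn b by auto
        have "u \<otimes> (c [^] Suc n \<otimes> \<phi> (b [^]\<^bsub>B\<^esub> Suc n))
            = c [^] n \<otimes> c \<otimes> (u \<otimes> \<phi> (b [^]\<^bsub>B\<^esub> n \<otimes>\<^bsub>B\<^esub> b))"
          using 2 \<phi>b \<phi>bn by (simp add: m_ac)
        also have "\<dots> = (c [^] n \<otimes> \<phi> (b [^]\<^bsub>B\<^esub> n)) \<otimes> (\<phi> b \<otimes> c)"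
          using \<phi>_mult[OF bn b] 2 \<phi>b \<phi>bn by (simp add: m_ac)
        also have "\<dots> = u \<otimes> u" using Suc 2 by simp
        finally show ?case
          using m_lcancel[OF u uc, of "c [^] Suc n \<otimes> \<phi> (b [^]\<^bsub>B\<^esub> Suc n)" u] 2 \<phi> b uc
          by (simp add: Pi_iff)
      qed
      have "u \<in> pow_multiples V c"
        unfolding pow_multiples_def using pow \<phi> b uc by (auto simp: Pi_iff)
      then show ?thesis
        using rank_le_one_pow_multiples_trivial[OF V \<open>c \<in> carrier V\<close> \<open>c \<noteq> \<zero>\<close> False] u by simp
    qed
  qed
qed

lemma twisted_mult_div_ring_hom:
  fixes V (structure)
  assumes V: "domain V" and B: "ring B"
    and \<phi>: "\<phi> \<in> carrier B \<rightarrow> carrier V"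
    and \<phi>_one: "\<phi> \<one>\<^bsub>B\<^esub> = u" and u: "u \<noteq> \<zero>"
    and \<phi>_add: "\<And>b b'. b \<in> carrier B \<Longrightarrow> b' \<in> carrier B \<Longrightarrow>
       \<phi> (b \<oplus>\<^bsub>B\<^esub> b') = \<phi> b \<oplus> \<phi> b'"
    and \<phi>_mult: "\<And>b b'. b \<in> carrier B \<Longrightarrow> b' \<in> carrier B \<Longrightarrow>
       u \<otimes> \<phi> (b \<otimes>\<^bsub>B\<^esub> b') = \<phi> b \<otimes> \<phi> b'"
    and dvd: "\<And>b. b \<in> carrier B \<Longrightarrow> \<exists>c\<in>carrier V. \<phi> b = u \<otimes> c"
  shows "\<exists>h\<in>ring_hom B V. \<forall>b\<in>carrier B. \<phi> b = u \<otimes> h b"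
proof -
  interpret domain V by (rule V)
  interpret B: ring B by (rule B)
  have uc: "u \<in> carrier V" using \<phi> \<phi>_one by force
  have cancel: "c = c'" if "c \<in> carrier V" "c' \<in> carrier V" "u \<otimes> c = u \<otimes> c'" for c c'
    using m_lcancel[OF u uc that(1,2)] that(3) by simp
  define h where "h b = (THE c. c \<in> carrier V \<and> \<phi> b = u \<otimes> c)" for b
  have h_eqI: "h b = c" if "c \<in> carrier V" "\<phi> b = u \<otimes> c" for b c
    unfolding h_def by (rule the_equality) (use that cancel in auto)
  have h: "h b \<in> carrier V \<and> \<phi> b = u \<otimes> h b" if "b \<in> carrier B" for b
    using dvd[OF that] h_eqI by auto
  have "h \<in> ring_hom B V"
  proof (rule ring_hom_memI)
    fix b b' assume b: "b \<in> carrier B" and b': "b' \<in> carrier B"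
    show "h b \<in> carrier V" using h[OF b] by simp
    have "u \<otimes> \<phi> (b \<otimes>\<^bsub>B\<^esub> b') = u \<otimes> (u \<otimes> (h b \<otimes> h b'))"
      using \<phi>_mult[OF b b'] h[OF b] h[OF b'] uc by (simp add: m_ac)
    then have "\<phi> (b \<otimes>\<^bsub>B\<^esub> b') = u \<otimes> (h b \<otimes> h b')"
      by (rule cancel[rotated 2]) (use \<phi> b b' h[OF b] h[OF b'] uc in auto)
    then show "h (b \<otimes>\<^bsub>B\<^esub> b') = h b \<otimes> h b'"
      using h_eqI h[OF b] h[OF b'] by simp
    have "\<phi> (b \<oplus>\<^bsub>B\<^esub> b') = u \<otimes> (h b \<oplus> h b')"
      using \<phi>_add[OF b b'] h[OF b] h[OF b'] uc by (simp add: r_distr)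
    then show "h (b \<oplus>\<^bsub>B\<^esub> b') = h b \<oplus> h b'"
      using h_eqI h[OF b] h[OF b'] by simp
  next
    show "h \<one>\<^bsub>B\<^esub> = \<one>" using h_eqI[of \<one> "\<one>\<^bsub>B\<^esub>"] \<phi>_one uc by simp
  qed
  then show ?thesis using h by blast
qed

lemma excision_datumD:
  assumes "excision_datum A B f I J"
  shows "cring A" "cring B" "f \<in> ring_hom A B" "ideal I A" "ideal J B" "inj_on f I" "f ` I = J"
  using assms unfolding excision_datum_def bij_betw_def by simp_all

text \<open>The preimage in \<open>I\<close> of \<open>f x\<^sub>0 \<cdot> b \<in> J\<close>: morally \<open>x\<^sub>0 b\<close>, even when \<open>b\<close> is not in the
  image of \<open>f\<close>.\<close>

definition excision_section :: "('b, 'm) ring_scheme \<Rightarrow> ('a \<Rightarrow> 'b) \<Rightarrow> 'a set \<Rightarrow> 'a \<Rightarrow> 'b \<Rightarrow> 'a" where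
  "excision_section B f I x\<^sub>0 b = (THE y. y \<in> I \<and> f y = f x\<^sub>0 \<otimes>\<^bsub>B\<^esub> b)"

context
  fixes A :: "'a ring" and B :: "'b ring"
    and f :: "'a \<Rightarrow> 'b" and I :: "'a set" and J :: "'b set" and x\<^sub>0 :: 'a
  assumes exc: "excision_datum A B f I J" and x\<^sub>0: "x\<^sub>0 \<in> I"
begin

private abbreviation (input) "Y \<equiv> excision_section B f I x\<^sub>0"

private lemmas ring_hom_f = excision_datumD(3)[OF exc]

lemma excision_section_eqI:
  assumes "y \<in> I" "f y = f x\<^sub>0 \<otimes>\<^bsub>B\<^esub> b"
  shows "excision_section B f I x\<^sub>0 b = y"
  unfolding excision_section_def
  by (rule the_equality) (use assms inj_onD[OF excision_datumD(6)[OF exc]] in auto)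

lemma excision_section:
  assumes b: "b \<in> carrier B"
  shows "excision_section B f I x\<^sub>0 b \<in> I"
    and "f (excision_section B f I x\<^sub>0 b) = f x\<^sub>0 \<otimes>\<^bsub>B\<^esub> b"
proof -
  have "f x\<^sub>0 \<in> J" using x\<^sub>0 excision_datumD(7)[OF exc] by blast
  then have "f x\<^sub>0 \<otimes>\<^bsub>B\<^esub> b \<in> f ` I"
    using ideal.I_r_closed[OF excision_datumD(5)[OF exc] _ b] excision_datumD(7)[OF exc] by simp
  then obtain y where y: "y \<in> I" "f y = f x\<^sub>0 \<otimes>\<^bsub>B\<^esub> b" by (metis imageE)
  then show "Y b \<in> I" "f (Y b) = f x\<^sub>0 \<otimes>\<^bsub>B\<^esub> b"
    using excision_section_eqI[OF y] by simp_all
qed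

lemma excision_section_add:
  assumes "b \<in> carrier B" "b' \<in> carrier B"
  shows "excision_section B f I x\<^sub>0 (b \<oplus>\<^bsub>B\<^esub> b') =
    excision_section B f I x\<^sub>0 b \<oplus>\<^bsub>A\<^esub> excision_section B f I x\<^sub>0 b'"
proof (rule excision_section_eqI)
  interpret I: ideal I A by (rule excision_datumD(4)[OF exc])
  interpret B: cring B by (rule excision_datumD(2)[OF exc])
  show "Y b \<oplus>\<^bsub>A\<^esub> Y b' \<in> I" using excision_section(1) assms by (simp add: I.a_closed)
  show "f (Y b \<oplus>\<^bsub>A\<^esub> Y b') = f x\<^sub>0 \<otimes>\<^bsub>B\<^esub> (b \<oplus>\<^bsub>B\<^esub> b')"
    using ring_hom_add[OF ring_hom_f] excision_section assms x\<^sub>0 ring_hom_closed[OF ring_hom_f]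
    by (simp add: B.r_distr I.Icarr)
qed

lemma excision_section_mult:
  assumes b: "b \<in> carrier B" and b': "b' \<in> carrier B"
  shows "x\<^sub>0 \<otimes>\<^bsub>A\<^esub> excision_section B f I x\<^sub>0 (b \<otimes>\<^bsub>B\<^esub> b') =
    excision_section B f I x\<^sub>0 b \<otimes>\<^bsub>A\<^esub> excision_section B f I x\<^sub>0 b'"
proof -
  interpret I: ideal I A by (rule excision_datumD(4)[OF exc])
  interpret B: cring B by (rule excision_datumD(2)[OF exc])
  have Yb: "Y b \<in> I" "Y b' \<in> I" "Y (b \<otimes>\<^bsub>B\<^esub> b') \<in> I"
    using excision_section(1) b b' by simp_all
  have fx\<^sub>0: "f x\<^sub>0 \<in> carrier B" using ring_hom_closed[OF ring_hom_f] I.Icarr[OF x\<^sub>0] .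
  \<comment> \<open>Both sides lie in \<open>I\<close> and have the image \<open>f(x\<^sub>0)\<^sup>2 b b'\<close>, so injectivity on \<open>I\<close> applies.\<close>
  have "f (x\<^sub>0 \<otimes>\<^bsub>A\<^esub> Y (b \<otimes>\<^bsub>B\<^esub> b')) = f x\<^sub>0 \<otimes>\<^bsub>B\<^esub> (f x\<^sub>0 \<otimes>\<^bsub>B\<^esub> (b \<otimes>\<^bsub>B\<^esub> b'))"
    using ring_hom_mult[OF ring_hom_f] excision_section(2) x\<^sub>0 Yb b b' by (simp add: I.Icarr)
  also have "\<dots> = (f x\<^sub>0 \<otimes>\<^bsub>B\<^esub> b) \<otimes>\<^bsub>B\<^esub> (f x\<^sub>0 \<otimes>\<^bsub>B\<^esub> b')"
    using b b' fx\<^sub>0 by (simp add: B.m_ac)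
  also have "\<dots> = f (Y b \<otimes>\<^bsub>A\<^esub> Y b')"
    using ring_hom_mult[OF ring_hom_f] excision_section(2) Yb b b' by (simp add: I.Icarr)
  finally show ?thesis
    using inj_onD[OF excision_datumD(6)[OF exc]] Yb x\<^sub>0
    by (simp add: I.I_l_closed I.I_r_closed I.Icarr)
qed

lemma excision_section_one: "excision_section B f I x\<^sub>0 \<one>\<^bsub>B\<^esub> = x\<^sub>0"
proof (rule excision_section_eqI[OF x\<^sub>0])
  interpret I: ideal I A by (rule excision_datumD(4)[OF exc])
  interpret B: cring B by (rule excision_datumD(2)[OF exc])
  show "f x\<^sub>0 = f x\<^sub>0 \<otimes>\<^bsub>B\<^esub> \<one>\<^bsub>B\<^esub>" using ring_hom_closed[OF ring_hom_f] I.Icarr[OF x\<^sub>0] by simp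
qed

lemma excision_section_image:
  assumes a: "a \<in> carrier A"
  shows "excision_section B f I x\<^sub>0 (f a) = x\<^sub>0 \<otimes>\<^bsub>A\<^esub> a"
proof (rule excision_section_eqI)
  interpret I: ideal I A by (rule excision_datumD(4)[OF exc])
  show "x\<^sub>0 \<otimes>\<^bsub>A\<^esub> a \<in> I" using I.I_r_closed[OF x\<^sub>0 a] .
  show "f (x\<^sub>0 \<otimes>\<^bsub>A\<^esub> a) = f x\<^sub>0 \<otimes>\<^bsub>B\<^esub> f a" using ring_hom_mult[OF ring_hom_f] I.Icarr[OF x\<^sub>0] a by blast
qed

end

lemma excision_datum_extends_ring_hom:
  fixes V :: "'v ring"
  assumes exc: "excision_datum A B f I J" and V: "valuation_ring_rank_le_one V"
    and g: "g \<in> ring_hom A V" and x\<^sub>0: "x\<^sub>0 \<in> I" "g x\<^sub>0 \<noteq> \<zero>\<^bsub>V\<^esub>"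
  shows "\<exists>h\<in>ring_hom B V. \<forall>a\<in>carrier A. h (f a) = g a"
proof -
  interpret V: domain V using V by (rule valuation_ring_rank_le_one_domain)
  interpret B: cring B by (rule excision_datumD(2)[OF exc])
  interpret I: ideal I A by (rule excision_datumD(4)[OF exc])
  let ?Y = "excision_section B f I x\<^sub>0"
  let ?\<phi> = "\<lambda>b. g (?Y b)"
  have Y: "?Y b \<in> carrier A" if "b \<in> carrier B" for b
    using excision_section(1)[OF exc x\<^sub>0(1) that] by (rule I.Icarr)
  have x\<^sub>0A: "x\<^sub>0 \<in> carrier A" using I.Icarr[OF x\<^sub>0(1)] .
  have \<phi>: "?\<phi> \<in> carrier B \<rightarrow> carrier V" using ring_hom_closed[OF g] Y by blast
  have \<phi>_one: "?\<phi> \<one>\<^bsub>B\<^esub> = g x\<^sub>0" using excision_section_one[OF exc x\<^sub>0(1)] by simp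
  have \<phi>_add: "?\<phi> (b \<oplus>\<^bsub>B\<^esub> b') = ?\<phi> b \<oplus>\<^bsub>V\<^esub> ?\<phi> b'"
    if "b \<in> carrier B" "b' \<in> carrier B" for b b'
    using excision_section_add[OF exc x\<^sub>0(1) that] ring_hom_add[OF g] Y that by simp
  have \<phi>_mult: "g x\<^sub>0 \<otimes>\<^bsub>V\<^esub> ?\<phi> (b \<otimes>\<^bsub>B\<^esub> b') = ?\<phi> b \<otimes>\<^bsub>V\<^esub> ?\<phi> b'"
    if "b \<in> carrier B" "b' \<in> carrier B" for b b'
    using arg_cong[OF excision_section_mult[OF exc x\<^sub>0(1) that], of g] ring_hom_mult[OF g] Y x\<^sub>0A that
    by simp
  obtain h where h: "h \<in> ring_hom B V" and \<phi>_h: "\<And>b. b \<in> carrier B \<Longrightarrow> ?\<phi> b = g x\<^sub>0 \<otimes>\<^bsub>V\<^esub> h b"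
    using twisted_mult_div_ring_hom[OF V.domain_axioms B.ring_axioms \<phi> \<phi>_one x\<^sub>0(2) \<phi>_add \<phi>_mult
        rank_le_one_divides_twisted_mult[OF V B.monoid_axioms \<phi> \<phi>_one x\<^sub>0(2) \<phi>_mult]]
    by blast
  have "h (f a) = g a" if a: "a \<in> carrier A" for a
  proof -
    have fa: "f a \<in> carrier B" using ring_hom_closed[OF excision_datumD(3)[OF exc] a] .
    have "g x\<^sub>0 \<otimes>\<^bsub>V\<^esub> h (f a) = g x\<^sub>0 \<otimes>\<^bsub>V\<^esub> g a"
      using \<phi>_h[OF fa] excision_section_image[OF exc x\<^sub>0(1) a] ring_hom_mult[OF g x\<^sub>0A a] by simp
    then show ?thesis
      using V.m_lcancel[OF x\<^sub>0(2)] ring_hom_closed[OF g] ring_hom_closed[OF h] fa a x\<^sub>0A by simp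
  qed
  then show ?thesis using h by blast
qed

lemma ring_hom_factors_through_FactRing:
  assumes I: "ideal I A" and S: "ring S" and g: "g \<in> ring_hom A S"
    and g_I: "\<forall>x\<in>I. g x = \<zero>\<^bsub>S\<^esub>"
  shows "\<exists>h\<in>ring_hom (A Quot I) S. \<forall>a\<in>carrier A. h (I +>\<^bsub>A\<^esub> a) = g a"
proof -
  interpret I: ideal I A by (rule I)
  interpret S: ring S by (rule S)
  have coset: "g ` (I +>\<^bsub>A\<^esub> a) = {g a}" if a: "a \<in> carrier A" for a
  proof -
    have "g (i \<oplus>\<^bsub>A\<^esub> a) = g a" if "i \<in> I" for i
      using ring_hom_add[OF g I.Icarr[OF that] a] ring_hom_closed[OF g a] g_I that by simp
    moreover have "\<zero>\<^bsub>A\<^esub> \<oplus>\<^bsub>A\<^esub> a = a" using a by simp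
    ultimately show ?thesis
      unfolding a_r_coset_def' using I.additive_subgroup_axioms additive_subgroup.zero_closed
      by (auto intro!: image_eqI[of _ _ "\<zero>\<^bsub>A\<^esub> \<oplus>\<^bsub>A\<^esub> a"])
  qed
  let ?h = "\<lambda>Z. the_elem (g ` Z)"
  have h_coset: "?h (I +>\<^bsub>A\<^esub> a) = g a" if "a \<in> carrier A" for a
    using coset[OF that] by simp
  have cosets: "\<exists>a\<in>carrier A. Z = I +>\<^bsub>A\<^esub> a" if "Z \<in> carrier (A Quot I)" for Z
    using that unfolding FactRing_def A_RCOSETS_def' by auto
  have "?h \<in> ring_hom (A Quot I) S"
  proof (rule ring_hom_memI)
    fix Z Z' assume "Z \<in> carrier (A Quot I)" "Z' \<in> carrier (A Quot I)"
    then obtain a b where a: "a \<in> carrier A" "Z = I +>\<^bsub>A\<^esub> a" and b: "b \<in> carrier A" "Z' = I +>\<^bsub>A\<^esub> b"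
      using cosets by blast
    show "?h Z \<in> carrier S" using h_coset a ring_hom_closed[OF g] by simp
    have "Z \<otimes>\<^bsub>A Quot I\<^esub> Z' = I +>\<^bsub>A\<^esub> (a \<otimes>\<^bsub>A\<^esub> b)"
      using a b I.rcoset_mult_add by (simp add: FactRing_def)
    then show "?h (Z \<otimes>\<^bsub>A Quot I\<^esub> Z') = ?h Z \<otimes>\<^bsub>S\<^esub> ?h Z'"
      using a b h_coset ring_hom_mult[OF g] by simp
    have "Z \<oplus>\<^bsub>A Quot I\<^esub> Z' = I +>\<^bsub>A\<^esub> (a \<oplus>\<^bsub>A\<^esub> b)"
      using a b I.a_rcos_sum by (simp add: FactRing_def)
    then show "?h (Z \<oplus>\<^bsub>A Quot I\<^esub> Z') = ?h Z \<oplus>\<^bsub>S\<^esub> ?h Z'"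
      using a b h_coset ring_hom_add[OF g] by simp
  next
    have "\<one>\<^bsub>A Quot I\<^esub> = I +>\<^bsub>A\<^esub> \<one>\<^bsub>A\<^esub>" by (simp add: FactRing_def)
    then show "?h \<one>\<^bsub>A Quot I\<^esub> = \<one>\<^bsub>S\<^esub>"
      using h_coset[OF I.one_closed] ring_hom_one[OF g] by (simp only:)
  qed
  then show ?thesis using h_coset by (intro bexI[of _ ?h]) simp_all
qed

lemma ring_hom_fst_RDirProd: "fst \<in> ring_hom (RDirProd R S) R"
  unfolding RDirProd_def DirProd_def
  by (rule ring_hom_memI) (auto simp add: monoid.defs split: prod.splits)

lemma ring_hom_snd_RDirProd: "snd \<in> ring_hom (RDirProd R S) S"
  unfolding RDirProd_def DirProd_def
  by (rule ring_hom_memI) (auto simp add: monoid.defs split: prod.splits)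

lemma faithfully_flat_hom_id:
  fixes V (structure)
  assumes "ring V"
  shows "faithfully_flat_hom V V id"
proof -
  interpret ring V by fact
  have "flat_hom V V id"
    unfolding flat_hom_def
  proof (intro allI impI)
    fix n :: nat and a m
    assume rel: "(\<forall>i<n. a i \<in> carrier V \<and> m i \<in> carrier V) \<and> (\<Oplus>i\<in>{..<n}. id (a i) \<otimes> m i) = \<zero>"
    have m_sum: "m i = (\<Oplus>j\<in>{..<1::nat}. id (m i) \<otimes> \<one>)" if "i < n" for i
      using rel that by (simp add: lessThan_Suc finsum_insert)
    show "\<exists>k::nat. \<exists>b y. (\<forall>i<n. \<forall>j<k. b i j \<in> carrier V) \<and> (\<forall>j<k. y j \<in> carrier V) \<and>
        (\<forall>i<n. m i = (\<Oplus>j\<in>{..<k}. id (b i j) \<otimes> y j)) \<and>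
        (\<forall>j<k. (\<Oplus>i\<in>{..<n}. a i \<otimes> b i j) = \<zero>)"
      by (rule exI[of _ "1::nat"], rule exI[of _ "\<lambda>i j. m i"], rule exI[of _ "\<lambda>j. \<one>"])
        (use rel m_sum in auto)
  qed
  moreover have "Idl (id ` M) \<noteq> carrier V" if M: "maximalideal M V" for M
  proof -
    interpret M: maximalideal M V by (rule M)
    have "Idl M \<subseteq> M" by (rule genideal_minimal[OF M.is_ideal]) simp
    then show ?thesis using M.I_notcarr M.a_subset by auto
  qed
  ultimately show ?thesis unfolding faithfully_flat_hom_def by simp
qed

lemma excision_datum_factorization:
  fixes V :: "'v ring"
  assumes exc: "excision_datum A B f I J" and V: "valuation_ring_rank_le_one V"
    and g: "g \<in> ring_hom A V"
  shows "(\<exists>h\<in>ring_hom (A Quot I) V. \<forall>a\<in>carrier A. h (I +>\<^bsub>A\<^esub> a) = g a) \<or>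
         (\<exists>h\<in>ring_hom B V. \<forall>a\<in>carrier A. h (f a) = g a)"
proof (cases "\<forall>x\<in>I. g x = \<zero>\<^bsub>V\<^esub>")
  case True
  interpret V: domain V using V by (rule valuation_ring_rank_le_one_domain)
  show ?thesis
    using ring_hom_factors_through_FactRing[OF excision_datumD(4)[OF exc] V.ring_axioms g True] by blast
next
  case False
  then show ?thesis using excision_datum_extends_ring_hom[OF exc V g] by blast
qed

lemma excision_datum_factorization_RDirProd:
  fixes V :: "'v ring"
  assumes exc: "excision_datum A B f I J" and V: "valuation_ring_rank_le_one V"
    and g: "g \<in> ring_hom A V"
  shows "\<exists>\<psi>\<in>ring_hom (RDirProd (A Quot I) B) V. \<forall>a\<in>carrier A. \<psi> (I +>\<^bsub>A\<^esub> a, f a) = g a"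
  using excision_datum_factorization[OF exc V g]
proof
  assume "\<exists>h\<in>ring_hom (A Quot I) V. \<forall>a\<in>carrier A. h (I +>\<^bsub>A\<^esub> a) = g a"
  then obtain h where "h \<in> ring_hom (A Quot I) V" "\<forall>a\<in>carrier A. h (I +>\<^bsub>A\<^esub> a) = g a" by blast
  then show ?thesis by (intro bexI[of _ "h \<circ> fst"] ring_hom_trans[OF ring_hom_fst_RDirProd]) simp_all
next
  assume "\<exists>h\<in>ring_hom B V. \<forall>a\<in>carrier A. h (f a) = g a"
  then obtain h where "h \<in> ring_hom B V" "\<forall>a\<in>carrier A. h (f a) = g a" by blast
  then show ?thesis by (intro bexI[of _ "h \<circ> snd"] ring_hom_trans[OF ring_hom_snd_RDirProd]) simp_all
qed

theorem mainTheorem5: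
  fixes A :: "'a ring" and B :: "'b ring" and f :: "'a \<Rightarrow> 'b"
    and I :: "'a set" and J :: "'b set"
  assumes exc: "excision_datum A B f I J"
  shows
    "(\<forall>(V::'v ring) g. valuation_ring_rank_le_one V \<and> g \<in> ring_hom A V \<longrightarrow>
        (\<exists>h \<in> ring_hom (A Quot I) V. \<forall>a\<in>carrier A. h (I +>\<^bsub>A\<^esub> a) = g a) \<or>
        (\<exists>h \<in> ring_hom B V. \<forall>a\<in>carrier A. h (f a) = g a))
   \<and> (\<forall>(V::'v ring) g. valuation_ring_rank_le_one V \<and> g \<in> ring_hom A V \<longrightarrow>
        (\<exists>(W::'v ring) \<phi> \<psi>. valuation_ring_rank_le_one W \<and> faithfully_flat_hom V W \<phi> \<and>
           \<psi> \<in> ring_hom (RDirProd (A Quot I) B) W \<and>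
           (\<forall>a\<in>carrier A. \<psi> (I +>\<^bsub>A\<^esub> a, f a) = \<phi> (g a))))"
proof (intro conjI allI impI)
  fix V :: "'v ring" and g
  assume "valuation_ring_rank_le_one V \<and> g \<in> ring_hom A V"
  then show "(\<exists>h \<in> ring_hom (A Quot I) V. \<forall>a\<in>carrier A. h (I +>\<^bsub>A\<^esub> a) = g a) \<or>
      (\<exists>h \<in> ring_hom B V. \<forall>a\<in>carrier A. h (f a) = g a)"
    using excision_datum_factorization[OF exc] by blast
next
  fix V :: "'v ring" and g
  assume Vg: "valuation_ring_rank_le_one V \<and> g \<in> ring_hom A V"
  then obtain \<psi> where \<psi>: "\<psi> \<in> ring_hom (RDirProd (A Quot I) B) V"
    "\<forall>a\<in>carrier A. \<psi> (I +>\<^bsub>A\<^esub> a, f a) = g a"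
    using excision_datum_factorization_RDirProd[OF exc] by blast
  interpret V: domain V using Vg valuation_ring_rank_le_one_domain by blast
  show "\<exists>(W::'v ring) \<phi> \<psi>. valuation_ring_rank_le_one W \<and> faithfully_flat_hom V W \<phi> \<and>
      \<psi> \<in> ring_hom (RDirProd (A Quot I) B) W \<and> (\<forall>a\<in>carrier A. \<psi> (I +>\<^bsub>A\<^esub> a, f a) = \<phi> (g a))"
    using Vg \<psi> faithfully_flat_hom_id[OF V.ring_axioms]
    by (intro exI[of _ V] exI[of _ id] exI[of _ \<psi>]) simp
qed

end
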